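(* Let $\alpha\geq1$ and $\phi(x):=(1+|x|^2)^{-\alpha}$ on $\mathbb{R}^3$. Then there is a constant $C$ such that for every $x,y\in\mathbb{R}^3$, $$\sup_{s\in[0,1]}|\nabla\phi(x-sy)|\leq C\alpha(1+|y|^{2\alpha})|\phi(x)|.$$ *)

theory Defs
  imports "HOL-Analysis.Analysis"
begin

definition gradient :: "('a::real_inner \<Rightarrow> real) \<Rightarrow> 'a \<Rightarrow> 'a" where
  "gradient f x = (THE D. GDERIV f x :> D)"

definition phiA :: "real \<Rightarrow> real ^ 3 \<Rightarrow> real" where
  "phiA \<alpha> x = (1 + (norm x)\<^sup>2) powr (- \<alpha>)"

end

theory Submission
  imports Defs
begin

text \<open>Since \<open>\<nabla>\<phi>(z) = -2\<alpha> (1 + |z|^2)^(-\<alpha>-1) z\<close> and \<open>2|z| \<le> 1 + |z|^2\<close>, the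
  gradient is bounded pointwise by \<open>\<alpha> \<phi>(z)\<close>. Peetre's inequality
  \<open>1 + |x|^2 \<le> 2 (1 + |x - w|^2) (1 + |w|^2)\<close> compares \<open>\<phi>(x - s y)\<close> with \<open>\<phi>(x)\<close> at the
  cost of a factor \<open>2^\<alpha> (1 + |y|^2)^\<alpha> \<le> 4^\<alpha> (1 + |y|^(2\<alpha>))\<close>, so \<open>C = 4^\<alpha>\<close> works.\<close>

lemma gradient_eqI:
  assumes "GDERIV f x :> D"
  shows "gradient f x = D"
  unfolding gradient_def
proof (rule the_equality)
  show "D' = D" if "GDERIV f x :> D'" for D'
  proof -
    have "(\<lambda>h. h \<bullet> D') = (\<lambda>h. h \<bullet> D)"
      using that assms unfolding gderiv_def by (rule has_derivative_unique)
    then show ?thesis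
      by (metis vector_eq_ldot)
  qed
qed (fact assms)

lemma GDERIV_norm_power2: "GDERIV (\<lambda>x. (norm x)\<^sup>2) z :> 2 *\<^sub>R z"
  unfolding gderiv_def power2_norm_eq_inner
  by (rule derivative_eq_intros | simp add: inner_commute)+

lemma gradient_phiA:
  "gradient (phiA a) z = (- 2 * a * (1 + (norm z)\<^sup>2) powr (- a - 1)) *\<^sub>R z"
proof (rule gradient_eqI)
  have inner: "GDERIV (\<lambda>x. 1 + (norm x)\<^sup>2) z :> 2 *\<^sub>R z"
    using GDERIV_add[OF GDERIV_const GDERIV_norm_power2] by simp
  have outer: "DERIV (\<lambda>t. t powr (- a)) (1 + (norm z)\<^sup>2) :> - a * (1 + (norm z)\<^sup>2) powr (- a - 1)"
    by (rule derivative_eq_intros | simp add: add_pos_nonneg)+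
  show "GDERIV (phiA a) z :> (- 2 * a * (1 + (norm z)\<^sup>2) powr (- a - 1)) *\<^sub>R z"
    using GDERIV_DERIV_compose[OF inner outer] unfolding phiA_def [abs_def] by (simp add: mult_ac)
qed

lemma norm_gradient_phiA_le:
  assumes "a \<ge> 0"
  shows "norm (gradient (phiA a) z) \<le> a * phiA a z"
proof -
  define t where "t = 1 + (norm z)\<^sup>2"
  have "t > 0"
    unfolding t_def by (simp add: add_pos_nonneg)
  have "0 \<le> (norm z - 1)\<^sup>2"
    by simp
  then have "2 * norm z \<le> t"
    unfolding t_def by (simp add: power2_eq_square algebra_simps)
  have "norm (gradient (phiA a) z) = a * t powr (- a - 1) * (2 * norm z)"
    unfolding gradient_phiA t_def using assms by (simp add: abs_mult)
  also have "\<dots> \<le> a * t powr (- a - 1) * t"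
    using assms \<open>2 * norm z \<le> t\<close> by (intro mult_left_mono) auto
  also have "\<dots> = a * t powr (- a)"
    using \<open>t > 0\<close> by (simp add: powr_diff powr_minus field_simps)
  finally show ?thesis
    unfolding phiA_def t_def .
qed

lemma peetre_inequality:
  fixes x w :: "'a::real_normed_vector"
  shows "1 + (norm x)\<^sup>2 \<le> 2 * (1 + (norm (x - w))\<^sup>2) * (1 + (norm w)\<^sup>2)"
proof -
  have "norm x \<le> norm (x - w) + norm w"
    using norm_triangle_ineq[of "x - w" w] by simp
  then have "(norm x)\<^sup>2 \<le> (norm (x - w) + norm w)\<^sup>2"
    by (simp add: power_mono)
  also have "\<dots> \<le> 2 * (norm (x - w))\<^sup>2 + 2 * (norm w)\<^sup>2"
    using zero_le_power2[of "norm (x - w) - norm w"] by (simp add: power2_eq_square algebra_simps)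
  finally have "(norm x)\<^sup>2 \<le> 2 * (norm (x - w))\<^sup>2 + 2 * (norm w)\<^sup>2" .
  moreover have "2 * (1 + (norm (x - w))\<^sup>2) * (1 + (norm w)\<^sup>2)
      = 2 + 2 * (norm (x - w))\<^sup>2 + 2 * (norm w)\<^sup>2 + 2 * ((norm (x - w))\<^sup>2 * (norm w)\<^sup>2)"
    by (simp add: algebra_simps)
  moreover have "0 \<le> (norm (x - w))\<^sup>2 * (norm w)\<^sup>2"
    by simp
  ultimately show ?thesis
    by linarith
qed

lemma one_plus_powr_le:
  fixes u a :: real
  assumes "u \<ge> 0" "a \<ge> 0"
  shows "(1 + u) powr a \<le> 2 powr a * (1 + u powr a)"
proof -
  have "(1 + u) powr a \<le> (2 * max 1 u) powr a"
    using assms by (intro powr_mono2) auto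
  also have "\<dots> = 2 powr a * max 1 u powr a"
    by (simp add: powr_mult)
  also have "max 1 u powr a \<le> 1 + u powr a"
    by (cases "u \<le> 1") (auto simp: max_def)
  finally show ?thesis
    by simp
qed

lemma phiA_translate_le:
  assumes "a \<ge> 0"
  shows "phiA a (x - w) \<le> 2 powr a * (1 + (norm w)\<^sup>2) powr a * phiA a x"
proof -
  define tx tz tw where "tx = 1 + (norm x)\<^sup>2" and "tz = 1 + (norm (x - w))\<^sup>2"
    and "tw = 1 + (norm w)\<^sup>2"
  have pos: "tx > 0" "tz > 0" "tw > 0"
    unfolding tx_def tz_def tw_def by (simp_all add: add_pos_nonneg)
  have "tx powr a \<le> (2 * tz * tw) powr a"
    using peetre_inequality[of x w] pos assms
    unfolding tx_def tz_def tw_def by (intro powr_mono2) auto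
  also have "\<dots> = 2 powr a * tw powr a * tz powr a"
    using pos by (simp add: powr_mult mult_ac)
  finally have "tx powr a \<le> 2 powr a * tw powr a * tz powr a" .
  then show ?thesis
    unfolding phiA_def tx_def [symmetric] tz_def [symmetric] tw_def [symmetric]
    using pos by (simp add: powr_minus field_simps)
qed

lemma phiA_shift_le:
  assumes "a \<ge> 0" "norm w \<le> norm y"
  shows "phiA a (x - w) \<le> 4 powr a * (1 + norm y powr (2 * a)) * phiA a x"
proof -
  have "(1 + (norm w)\<^sup>2) powr a \<le> (1 + (norm y)\<^sup>2) powr a"
    using assms by (intro powr_mono2 add_left_mono power_mono) auto
  also have "\<dots> \<le> 2 powr a * (1 + ((norm y)\<^sup>2) powr a)"
    using assms by (intro one_plus_powr_le) auto
  also have "((norm y)\<^sup>2) powr a = norm y powr (2 * a)"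
    by (simp add: powr_powr [symmetric] powr_realpow [symmetric])
  finally have factor_le: "(1 + (norm w)\<^sup>2) powr a \<le> 2 powr a * (1 + norm y powr (2 * a))" .
  have "phiA a (x - w) \<le> 2 powr a * (1 + (norm w)\<^sup>2) powr a * phiA a x"
    using assms(1) by (rule phiA_translate_le)
  also have "\<dots> \<le> 2 powr a * (2 powr a * (1 + norm y powr (2 * a))) * phiA a x"
    using factor_le unfolding phiA_def
    by (intro mult_right_mono mult_left_mono) auto
  also have "\<dots> = 4 powr a * (1 + norm y powr (2 * a)) * phiA a x"
    by (simp add: powr_mult [symmetric])
  finally show ?thesis .
qed

theorem lemmaA1:
  fixes \<alpha> :: real
  assumes "\<alpha> \<ge> 1"
  shows "\<exists>C. \<forall>x y :: real ^ 3.
           (SUP s\<in>{0..1::real}. norm (gradient (phiA \<alpha>) (x - s *\<^sub>R y)))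
             \<le> C * \<alpha> * (1 + norm y powr (2 * \<alpha>)) * \<bar>phiA \<alpha> x\<bar>"
proof (intro exI allI)
  fix x y :: "real ^ 3"
  have "\<alpha> \<ge> 0"
    using assms by simp
  show "(SUP s\<in>{0..1::real}. norm (gradient (phiA \<alpha>) (x - s *\<^sub>R y)))
          \<le> 4 powr \<alpha> * \<alpha> * (1 + norm y powr (2 * \<alpha>)) * \<bar>phiA \<alpha> x\<bar>"
  proof (rule cSUP_least)
    fix s :: real
    assume "s \<in> {0..1}"
    then have "norm (s *\<^sub>R y) \<le> norm y"
      by (simp add: mult_left_le_one_le)
    then have "\<alpha> * phiA \<alpha> (x - s *\<^sub>R y) \<le> \<alpha> * (4 powr \<alpha> * (1 + norm y powr (2 * \<alpha>)) * phiA \<alpha> x)"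
      using \<open>\<alpha> \<ge> 0\<close> by (intro mult_left_mono phiA_shift_le) auto
    moreover have "\<bar>phiA \<alpha> x\<bar> = phiA \<alpha> x"
      unfolding phiA_def by simp
    ultimately show "norm (gradient (phiA \<alpha>) (x - s *\<^sub>R y)) \<le> 4 powr \<alpha> * \<alpha> * (1 + norm y powr (2 * \<alpha>)) * \<bar>phiA \<alpha> x\<bar>"
      using norm_gradient_phiA_le[OF \<open>\<alpha> \<ge> 0\<close>, of "x - s *\<^sub>R y"] by (simp add: mult_ac)
  qed simp
qed

end
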